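(* Let $C$ be a coalgebra and $H$ a bialgebra over $\mathbb{K}$. Let $P$ be an algebra which is an $(H,C)$-bicomodule and whose left $H$-coaction ${}^H\rho$ is an algebra map. Suppose $P^C(B)$ is a $C$-coalgebra Galois extension with $B\subseteq {}^{\mathrm{co}H}P$ (so that ${}^H\rho$ is a $(B,B)$-bimodule map, where $B$ acts on $H\otimes P$ via the second factor). Then for every $c\in C$, in $H\otimes P\otimes_B P$, $$c^{[1]}{}_{(-1)}c^{[2]}{}_{(-1)}\otimes c^{[1]}{}_{(0)}\otimes_B c^{[2]}{}_{(0)}=1_H\otimes c^{[1]}\otimes_B c^{[2]}.$$ If, in addition, $H$ is a Hopf algebra with antipode $S$, then for every $c\in C$, $$c^{[1]}{}_{(-1)}\otimes c^{[1]}{}_{(0)}\otimes_B c^{[2]}=S(c^{[2]}{}_{(-1)})\otimes c^{[1]}\otimes_B c^{[2]}{}_{(0)}.$$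
   Context: Sweedler notation: left $H$-coaction ${}^H\rho(p)=p_{(-1)}\otimes p_{(0)}$, right $C$-coaction $\rho^C(p)=p_{(0)}\otimes p_{(1)}$. An $(H,C)$-bicomodule is a left $H$-comodule and right $C$-comodule whose coactions commute. ${}^{\mathrm{co}H}P=\{p\in P:{}^H\rho(p)=1_H\otimes p\}$. For $P$ an algebra and right $C$-comodule, $P^{\mathrm{co}C}=\{b\in P:\rho^C(bp)=b\rho^C(p)\ \forall p\}$; with $B=P^{\mathrm{co}C}$ the canonical map is $\mathrm{can}:P\otimes_BP\to P\otimes C$, $p\otimes_Bp'\mapsto pp'_{(0)}\otimes p'_{(1)}$, and $P^C(B)$ is a $C$-coalgebra Galois extension if $\mathrm{can}$ is bijective. The translation map is $\tau(c)=\mathrm{can}^{-1}(1_P\otimes c)=:c^{[1]}\otimes_B c^{[2]}$ (summation implicit). *)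

theory Defs
  imports Main "HOL.Vector_Spaces"
begin

text \<open>An element of a tensor product V1 (x) ... (x) Vn (possibly balanced over a
subalgebra B) is represented by a finitely supported formal linear combination
of tuples, i.e. a function from tuples to the field K.  Two representatives
denote the same tensor iff their difference lies in the K-span of the
defining relations (multilinearity, and B-balancedness where relevant).\<close>

definition supp :: "('x \<Rightarrow> 'k::zero) \<Rightarrow> 'x set" where
  "supp f = {x. f x \<noteq> 0}"

definition fdelta :: "'x \<Rightarrow> 'x \<Rightarrow> 'k::{zero,one}" where
  "fdelta x = (\<lambda>y. if y = x then 1 else 0)"

definition fadd :: "('x \<Rightarrow> 'k::plus) \<Rightarrow> ('x \<Rightarrow> 'k) \<Rightarrow> 'x \<Rightarrow> 'k" where
  "fadd f g = (\<lambda>x. f x + g x)"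

definition fscal :: "'k::times \<Rightarrow> ('x \<Rightarrow> 'k) \<Rightarrow> 'x \<Rightarrow> 'k" where
  "fscal k f = (\<lambda>x. k * f x)"

definition fspan :: "('x \<Rightarrow> 'k::comm_ring_1) set \<Rightarrow> ('x \<Rightarrow> 'k) set" where
  "fspan S = {f. \<exists>T r. finite T \<and> T \<subseteq> S \<and> f = (\<lambda>x. \<Sum>s\<in>T. r s * s x)}"

definition teq :: "('x \<Rightarrow> 'k::comm_ring_1) set \<Rightarrow> ('x \<Rightarrow> 'k) \<Rightarrow> ('x \<Rightarrow> 'k) \<Rightarrow> bool" where
  "teq R f g \<longleftrightarrow> (\<lambda>x. f x - g x) \<in> fspan R"

text \<open>Linearity relations in one slot (g inserts a vector into the slot).\<close>
definition linrels :: "('a \<Rightarrow> 'x) \<Rightarrow> ('k::comm_ring_1 \<Rightarrow> 'a::plus \<Rightarrow> 'a) \<Rightarrow> ('x \<Rightarrow> 'k) set" where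
  "linrels g s =
     {(\<lambda>y. fdelta (g (a + a')) y - fdelta (g a) y - fdelta (g a') y) | a a'. True}
   \<union> {(\<lambda>y. fdelta (g (s k a)) y - k * fdelta (g a) y) | k a. True}"

definition rels2 :: "('k::comm_ring_1 \<Rightarrow> 'a::plus \<Rightarrow> 'a) \<Rightarrow> ('k \<Rightarrow> 'b::plus \<Rightarrow> 'b)
    \<Rightarrow> ('a \<times> 'b \<Rightarrow> 'k) set" where
  "rels2 sA sB = (\<Union>b. linrels (\<lambda>a. (a, b)) sA) \<union> (\<Union>a. linrels (\<lambda>b. (a, b)) sB)"

definition rels3 :: "('k::comm_ring_1 \<Rightarrow> 'a::plus \<Rightarrow> 'a) \<Rightarrow> ('k \<Rightarrow> 'b::plus \<Rightarrow> 'b)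
    \<Rightarrow> ('k \<Rightarrow> 'c::plus \<Rightarrow> 'c) \<Rightarrow> ('a \<times> 'b \<times> 'c \<Rightarrow> 'k) set" where
  "rels3 sA sB sC =
     (\<Union>b c. linrels (\<lambda>a. (a, b, c)) sA) \<union> (\<Union>a c. linrels (\<lambda>b. (a, b, c)) sB)
   \<union> (\<Union>a b. linrels (\<lambda>c. (a, b, c)) sC)"

definition balrels2 :: "'p::times set \<Rightarrow> ('p \<times> 'p \<Rightarrow> 'k::comm_ring_1) set" where
  "balrels2 B = {(\<lambda>z. fdelta (x * b, y) z - fdelta (x, b * y) z) | x y b. b \<in> B}"

definition balrels3 :: "'p::times set \<Rightarrow> ('h \<times> 'p \<times> 'p \<Rightarrow> 'k::comm_ring_1) set" where
  "balrels3 B = {(\<lambda>z. fdelta (h, x * b, y) z - fdelta (h, x, b * y) z) | h x y b. b \<in> B}"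

text \<open>Relations of P (x)_B P and of H (x)_K (P (x)_B P).\<close>
definition relsPBP :: "('k::comm_ring_1 \<Rightarrow> 'p::{plus,times} \<Rightarrow> 'p) \<Rightarrow> 'p set \<Rightarrow> ('p \<times> 'p \<Rightarrow> 'k) set" where
  "relsPBP sP B = rels2 sP sP \<union> balrels2 B"

definition relsHPBP :: "('k::comm_ring_1 \<Rightarrow> 'h::plus \<Rightarrow> 'h) \<Rightarrow> ('k \<Rightarrow> 'p::{plus,times} \<Rightarrow> 'p)
    \<Rightarrow> 'p set \<Rightarrow> ('h \<times> 'p \<times> 'p \<Rightarrow> 'k) set" where
  "relsHPBP sH sP B = rels3 sH sP sP \<union> balrels3 B"

definition fext :: "('x \<Rightarrow> 'y \<Rightarrow> 'k::comm_ring_1) \<Rightarrow> ('x \<Rightarrow> 'k) \<Rightarrow> 'y \<Rightarrow> 'k" where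
  "fext \<phi> f = (\<lambda>y. \<Sum>x\<in>supp f. f x * \<phi> x y)"

definition fmap :: "('x \<Rightarrow> 'y) \<Rightarrow> ('x \<Rightarrow> 'k::comm_ring_1) \<Rightarrow> 'y \<Rightarrow> 'k" where
  "fmap h f = (\<lambda>y. \<Sum>x\<in>{x\<in>supp f. h x = y}. f x)"

definition ftens :: "('a \<Rightarrow> 'k::comm_ring_1) \<Rightarrow> ('b \<Rightarrow> 'k) \<Rightarrow> 'a \<times> 'b \<Rightarrow> 'k" where
  "ftens f g = (\<lambda>(a, b). f a * g b)"

text \<open>(phi (x) id) t, reassociated to a1 (x) a2 (x) b.\<close>
definition tens_left :: "('a \<Rightarrow> 'a1 \<times> 'a2 \<Rightarrow> 'k::comm_ring_1) \<Rightarrow> ('a \<times> 'b \<Rightarrow> 'k) \<Rightarrow> 'a1 \<times> 'a2 \<times> 'b \<Rightarrow> 'k" where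
  "tens_left \<phi> t = fext (\<lambda>(a, b). fmap (\<lambda>((a1, a2), b'). (a1, a2, b')) (ftens (\<phi> a) (fdelta b))) t"

text \<open>(id (x) psi) t.\<close>
definition tens_right :: "('b \<Rightarrow> 'b1 \<times> 'b2 \<Rightarrow> 'k::comm_ring_1) \<Rightarrow> ('a \<times> 'b \<Rightarrow> 'k) \<Rightarrow> 'a \<times> 'b1 \<times> 'b2 \<Rightarrow> 'k" where
  "tens_right \<psi> t = fext (\<lambda>(a, b). ftens (fdelta a) (\<psi> b)) t"

definition tmul :: "('a::times \<times> 'b::times \<Rightarrow> 'k::comm_ring_1) \<Rightarrow> ('a \<times> 'b \<Rightarrow> 'k) \<Rightarrow> 'a \<times> 'b \<Rightarrow> 'k" where
  "tmul f g = fmap (\<lambda>((a, b), (a', b')). (a * a', b * b')) (ftens f g)"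

definition lin_fun :: "('k::field \<Rightarrow> 'a::plus \<Rightarrow> 'a) \<Rightarrow> ('a \<Rightarrow> 'k) \<Rightarrow> bool" where
  "lin_fun s e \<longleftrightarrow> (\<forall>x y. e (x + y) = e x + e y) \<and> (\<forall>k x. e (s k x) = k * e x)"

definition lin_map :: "('k::field \<Rightarrow> 'a::plus \<Rightarrow> 'a) \<Rightarrow> ('k \<Rightarrow> 'b::plus \<Rightarrow> 'b) \<Rightarrow> ('a \<Rightarrow> 'b) \<Rightarrow> bool" where
  "lin_map s s' f \<longleftrightarrow> (\<forall>x y. f (x + y) = f x + f y) \<and> (\<forall>k x. f (s k x) = s' k (f x))"

text \<open>A K-linear map into a tensor product, given by representatives.\<close>
definition lin_mod :: "('x \<Rightarrow> 'k::field) set \<Rightarrow> ('k \<Rightarrow> 'a::plus \<Rightarrow> 'a) \<Rightarrow> ('a \<Rightarrow> 'x \<Rightarrow> 'k) \<Rightarrow> bool" where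
  "lin_mod R s \<phi> \<longleftrightarrow> (\<forall>x. finite (supp (\<phi> x)))
     \<and> (\<forall>x y. teq R (\<phi> (x + y)) (fadd (\<phi> x) (\<phi> y)))
     \<and> (\<forall>k x. teq R (\<phi> (s k x)) (fscal k (\<phi> x)))"

text \<open>Associative unital K-algebra (ring structure from the type class).\<close>
definition k_algebra :: "('k::field \<Rightarrow> 'a::{ring,monoid_mult} \<Rightarrow> 'a) \<Rightarrow> bool" where
  "k_algebra s \<longleftrightarrow> vector_space s \<and> (\<forall>k x y. s k (x * y) = s k x * y \<and> s k (x * y) = x * s k y)"

definition coalgebra :: "('k::field \<Rightarrow> 'c::ab_group_add \<Rightarrow> 'c) \<Rightarrow> ('c \<Rightarrow> 'c \<times> 'c \<Rightarrow> 'k) \<Rightarrow> ('c \<Rightarrow> 'k) \<Rightarrow> bool" where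
  "coalgebra s \<Delta> \<epsilon> \<longleftrightarrow> vector_space s \<and> lin_fun s \<epsilon> \<and> lin_mod (rels2 s s) s \<Delta>
     \<and> (\<forall>x. teq (rels3 s s s) (tens_left \<Delta> (\<Delta> x)) (tens_right \<Delta> (\<Delta> x)))
     \<and> (\<forall>x. (\<Sum>z\<in>supp (\<Delta> x). s (\<Delta> x z * \<epsilon> (fst z)) (snd z)) = x)
     \<and> (\<forall>x. (\<Sum>z\<in>supp (\<Delta> x). s (\<Delta> x z * \<epsilon> (snd z)) (fst z)) = x)"

definition bialgebra :: "('k::field \<Rightarrow> 'h::{ring,monoid_mult} \<Rightarrow> 'h) \<Rightarrow> ('h \<Rightarrow> 'h \<times> 'h \<Rightarrow> 'k) \<Rightarrow> ('h \<Rightarrow> 'k) \<Rightarrow> bool" where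
  "bialgebra s \<Delta> \<epsilon> \<longleftrightarrow> k_algebra s \<and> coalgebra s \<Delta> \<epsilon>
     \<and> (\<forall>x y. teq (rels2 s s) (\<Delta> (x * y)) (tmul (\<Delta> x) (\<Delta> y)))
     \<and> teq (rels2 s s) (\<Delta> 1) (fdelta (1, 1))
     \<and> (\<forall>x y. \<epsilon> (x * y) = \<epsilon> x * \<epsilon> y) \<and> \<epsilon> 1 = 1"

definition antipode :: "('k::field \<Rightarrow> 'h::{ring,monoid_mult} \<Rightarrow> 'h) \<Rightarrow> ('h \<Rightarrow> 'h \<times> 'h \<Rightarrow> 'k) \<Rightarrow> ('h \<Rightarrow> 'k) \<Rightarrow> ('h \<Rightarrow> 'h) \<Rightarrow> bool" where
  "antipode s \<Delta> \<epsilon> S \<longleftrightarrow> lin_map s s S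
     \<and> (\<forall>x. (\<Sum>z\<in>supp (\<Delta> x). s (\<Delta> x z) (S (fst z) * snd z)) = s (\<epsilon> x) 1)
     \<and> (\<forall>x. (\<Sum>z\<in>supp (\<Delta> x). s (\<Delta> x z) (fst z * S (snd z))) = s (\<epsilon> x) 1)"

definition left_comodule :: "('k::field \<Rightarrow> 'h::ab_group_add \<Rightarrow> 'h) \<Rightarrow> ('h \<Rightarrow> 'h \<times> 'h \<Rightarrow> 'k) \<Rightarrow> ('h \<Rightarrow> 'k)
    \<Rightarrow> ('k \<Rightarrow> 'p::ab_group_add \<Rightarrow> 'p) \<Rightarrow> ('p \<Rightarrow> 'h \<times> 'p \<Rightarrow> 'k) \<Rightarrow> bool" where
  "left_comodule sH \<Delta> \<epsilon> sP \<rho> \<longleftrightarrow> vector_space sP \<and> lin_mod (rels2 sH sP) sP \<rho>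
     \<and> (\<forall>x. teq (rels3 sH sH sP) (tens_left \<Delta> (\<rho> x)) (tens_right \<rho> (\<rho> x)))
     \<and> (\<forall>x. (\<Sum>z\<in>supp (\<rho> x). sP (\<rho> x z * \<epsilon> (fst z)) (snd z)) = x)"

definition right_comodule :: "('k::field \<Rightarrow> 'c::ab_group_add \<Rightarrow> 'c) \<Rightarrow> ('c \<Rightarrow> 'c \<times> 'c \<Rightarrow> 'k) \<Rightarrow> ('c \<Rightarrow> 'k)
    \<Rightarrow> ('k \<Rightarrow> 'p::ab_group_add \<Rightarrow> 'p) \<Rightarrow> ('p \<Rightarrow> 'p \<times> 'c \<Rightarrow> 'k) \<Rightarrow> bool" where
  "right_comodule sC \<Delta> \<epsilon> sP \<rho> \<longleftrightarrow> vector_space sP \<and> lin_mod (rels2 sP sC) sP \<rho>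
     \<and> (\<forall>x. teq (rels3 sP sC sC) (tens_left \<rho> (\<rho> x)) (tens_right \<Delta> (\<rho> x)))
     \<and> (\<forall>x. (\<Sum>z\<in>supp (\<rho> x). sP (\<rho> x z * \<epsilon> (snd z)) (fst z)) = x)"

definition bicomodule :: "('k::field \<Rightarrow> 'h::ab_group_add \<Rightarrow> 'h) \<Rightarrow> ('h \<Rightarrow> 'h \<times> 'h \<Rightarrow> 'k) \<Rightarrow> ('h \<Rightarrow> 'k)
    \<Rightarrow> ('k \<Rightarrow> 'c::ab_group_add \<Rightarrow> 'c) \<Rightarrow> ('c \<Rightarrow> 'c \<times> 'c \<Rightarrow> 'k) \<Rightarrow> ('c \<Rightarrow> 'k)
    \<Rightarrow> ('k \<Rightarrow> 'p::ab_group_add \<Rightarrow> 'p) \<Rightarrow> ('p \<Rightarrow> 'h \<times> 'p \<Rightarrow> 'k) \<Rightarrow> ('p \<Rightarrow> 'p \<times> 'c \<Rightarrow> 'k) \<Rightarrow> bool" where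
  "bicomodule sH \<Delta>H \<epsilon>H sC \<Delta>C \<epsilon>C sP \<rho>H \<rho>C \<longleftrightarrow>
     left_comodule sH \<Delta>H \<epsilon>H sP \<rho>H \<and> right_comodule sC \<Delta>C \<epsilon>C sP \<rho>C
     \<and> (\<forall>x. teq (rels3 sH sP sC) (tens_right \<rho>C (\<rho>H x)) (tens_left \<rho>H (\<rho>C x)))"

definition coaction_alg_map :: "('k::field \<Rightarrow> 'h::{ring,monoid_mult} \<Rightarrow> 'h) \<Rightarrow> ('k \<Rightarrow> 'p::{ring,monoid_mult} \<Rightarrow> 'p)
    \<Rightarrow> ('p \<Rightarrow> 'h \<times> 'p \<Rightarrow> 'k) \<Rightarrow> bool" where
  "coaction_alg_map sH sP \<rho> \<longleftrightarrow> (\<forall>x y. teq (rels2 sH sP) (\<rho> (x * y)) (tmul (\<rho> x) (\<rho> y)))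
     \<and> teq (rels2 sH sP) (\<rho> 1) (fdelta (1, 1))"

definition coinvH :: "('k::field \<Rightarrow> 'h::{ring,monoid_mult} \<Rightarrow> 'h) \<Rightarrow> ('k \<Rightarrow> 'p::{ring,monoid_mult} \<Rightarrow> 'p)
    \<Rightarrow> ('p \<Rightarrow> 'h \<times> 'p \<Rightarrow> 'k) \<Rightarrow> 'p set" where
  "coinvH sH sP \<rho> = {p. teq (rels2 sH sP) (\<rho> p) (fdelta (1, p))}"

definition lmulPC :: "'p::times \<Rightarrow> ('p \<times> 'c \<Rightarrow> 'k::comm_ring_1) \<Rightarrow> 'p \<times> 'c \<Rightarrow> 'k" where
  "lmulPC b u = fmap (\<lambda>(q, c). (b * q, c)) u"

definition coinvC :: "('k::field \<Rightarrow> 'c::ab_group_add \<Rightarrow> 'c) \<Rightarrow> ('k \<Rightarrow> 'p::{ring,monoid_mult} \<Rightarrow> 'p)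
    \<Rightarrow> ('p \<Rightarrow> 'p \<times> 'c \<Rightarrow> 'k) \<Rightarrow> 'p set" where
  "coinvC sC sP \<rho> = {b. \<forall>p. teq (rels2 sP sC) (\<rho> (b * p)) (lmulPC b (\<rho> p))}"

definition can :: "('p::{ring,monoid_mult} \<Rightarrow> 'p \<times> 'c \<Rightarrow> 'k::field) \<Rightarrow> ('p \<times> 'p \<Rightarrow> 'k) \<Rightarrow> 'p \<times> 'c \<Rightarrow> 'k" where
  "can \<rho> t = fext (\<lambda>(x, y). lmulPC x (\<rho> y)) t"

definition galois :: "('k::field \<Rightarrow> 'c::ab_group_add \<Rightarrow> 'c) \<Rightarrow> ('k \<Rightarrow> 'p::{ring,monoid_mult} \<Rightarrow> 'p)
    \<Rightarrow> ('p \<Rightarrow> 'p \<times> 'c \<Rightarrow> 'k) \<Rightarrow> bool" where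
  "galois sC sP \<rho> \<longleftrightarrow>
     (\<forall>t t'. finite (supp t) \<and> finite (supp t') \<and> teq (rels2 sP sC) (can \<rho> t) (can \<rho> t')
        \<longrightarrow> teq (relsPBP sP (coinvC sC sP \<rho>)) t t')
   \<and> (\<forall>u. finite (supp u) \<longrightarrow> (\<exists>t. finite (supp t) \<and> teq (rels2 sP sC) (can \<rho> t) u))"

end

theory Submission
  imports Defs "HOL-Library.Function_Algebras"
begin

text \<open>
  Write \<open>\<tau>(c) = c[1] \<otimes>\<^sub>B c[2]\<close>. Apply \<open>id \<otimes> can\<close>, which is injective on
  \<open>H \<otimes> P \<otimes>\<^sub>B P\<close> with left inverse \<open>id \<otimes> can\<^sup>-\<^sup>1\<close>, to both sides of the first identity.
  Because the two coactions commute and \<open>\<rho>\<^sub>H\<close> is multiplicative, the left side becomes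
  \<open>(\<rho>\<^sub>H \<otimes> id)(can \<tau>(c)) = (\<rho>\<^sub>H \<otimes> id)(1 \<otimes> c) = 1 \<otimes> 1 \<otimes> c\<close>, and so does the right side.

  For the second identity apply \<open>h \<otimes> x \<otimes> y \<mapsto> h S(y\<^sub>(\<^sub>-\<^sub>1\<^sub>)) \<otimes> x \<otimes> y\<^sub>(\<^sub>0\<^sub>)\<close> to the first one.
  This map is well defined on the balanced tensor product because \<open>B\<close> consists of
  \<open>H\<close>-coinvariants, and coassociativity, the antipode axiom and counitality reduce the image
  of the left side to \<open>c[1]\<^sub>(\<^sub>-\<^sub>1\<^sub>) \<otimes> c[1]\<^sub>(\<^sub>0\<^sub>) \<otimes> c[2]\<close>.
\<close>

section \<open>Formal linear combinations\<close>

interpretation fcomb: module "fscal :: 'k::field \<Rightarrow> ('x \<Rightarrow> 'k) \<Rightarrow> 'x \<Rightarrow> 'k"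
  by unfold_locales (auto simp: fscal_def fun_eq_iff algebra_simps)

abbreviation fin :: "('x \<Rightarrow> 'k::zero) \<Rightarrow> bool" where
  "fin f \<equiv> finite (supp f)"

lemma sum_fun_apply: "(\<Sum>a\<in>A. f a) x = (\<Sum>a\<in>A. f a x)"
  by (induct A rule: infinite_finite_induct) auto

lemma fscal_apply: "fscal k f x = k * f x"
  by (simp add: fscal_def)

lemma fscal_fscal: "fscal a (fscal b f) = fscal (a * b) (f :: 'x \<Rightarrow> 'k::field)"
  by (simp add: fun_eq_iff fscal_apply mult.assoc)

lemma fadd_eq_plus: "fadd f g = f + g"
  by (simp add: fadd_def plus_fun_def)

lemma fspan_eq_span: "fspan S = fcomb.span S"
  unfolding fspan_def fcomb.span_explicit
  by (auto simp: fun_eq_iff sum_fun_apply fscal_apply)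

lemma teq_iff_span: "teq R f g \<longleftrightarrow> f - g \<in> fcomb.span R"
  by (simp add: teq_def fspan_eq_span fun_diff_def)

lemma teq_sym: "teq (R :: ('x \<Rightarrow> 'k::field) set) f g \<Longrightarrow> teq R g f"
  unfolding teq_iff_span by (metis fcomb.span_neg minus_diff_eq)

lemma teq_trans [trans]: "teq (R :: ('x \<Rightarrow> 'k::field) set) f g \<Longrightarrow> teq R g h \<Longrightarrow> teq R f h"
  unfolding teq_iff_span using fcomb.span_add by fastforce

lemma teq_add:
  "teq (R :: ('x \<Rightarrow> 'k::field) set) f f' \<Longrightarrow> teq R g g' \<Longrightarrow> teq R (f + g) (f' + g')"
  unfolding teq_iff_span using fcomb.span_add by (fastforce simp: algebra_simps)

lemma teq_fscal:
  assumes "teq (R :: ('x \<Rightarrow> 'k::field) set) f g"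
  shows "teq R (fscal k f) (fscal k g)"
proof -
  have "fscal k f - fscal k g = fscal k (f - g)"
    by (simp add: fun_eq_iff fscal_apply algebra_simps)
  then show ?thesis
    using assms unfolding teq_iff_span by (metis fcomb.span_scale)
qed

lemma teq_if_rel: "f - g \<in> (R :: ('x \<Rightarrow> 'k::field) set) \<Longrightarrow> teq R f g"
  by (simp add: teq_iff_span fcomb.span_base)

lemma fin_add: "fin f \<Longrightarrow> fin g \<Longrightarrow> fin (f + (g :: 'x \<Rightarrow> 'k::ab_group_add))"
  by (rule finite_subset[of _ "supp f \<union> supp g"]) (auto simp: supp_def)

lemma fin_diff: "fin f \<Longrightarrow> fin g \<Longrightarrow> fin (f - (g :: 'x \<Rightarrow> 'k::ab_group_add))"
  by (rule finite_subset[of _ "supp f \<union> supp g"]) (auto simp: supp_def)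

lemma fin_fscal: "fin f \<Longrightarrow> fin (fscal k (f :: 'x \<Rightarrow> 'k::field))"
  by (rule finite_subset[of _ "supp f"]) (auto simp: supp_def fscal_apply)

lemma fun_zero_eq [simp]: "(\<lambda>x. 0) = 0"
  by (simp add: fun_eq_iff)

lemma fin_zero [simp]: "fin (0 :: 'x \<Rightarrow> 'k::zero)"
  by (simp add: supp_def)

lemma fin_fdelta [simp]: "fin (fdelta a :: 'x \<Rightarrow> 'k::zero_neq_one)"
  by (rule finite_subset[of _ "{a}"]) (auto simp: supp_def fdelta_def)

lemma fin_sum:
  "finite A \<Longrightarrow> (\<And>a. a \<in> A \<Longrightarrow> fin (g a)) \<Longrightarrow> fin (\<Sum>a\<in>A. g a :: 'x \<Rightarrow> 'k::ab_group_add)"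
  by (induct A rule: finite_induct) (auto intro: fin_add)

section \<open>Linear extension of maps on generators\<close>

lemma fext_eq_sum_over:
  "finite A \<Longrightarrow> supp f \<subseteq> A \<Longrightarrow> fext \<phi> f = (\<lambda>y. \<Sum>x\<in>A. f x * \<phi> x y)"
  unfolding fext_def by (auto simp: fun_eq_iff supp_def intro!: sum.mono_neutral_left)

lemma fext_eq_sum: "fext \<phi> f = (\<Sum>x\<in>supp f. fscal (f x) (\<phi> x))"
  by (simp add: fext_def fun_eq_iff sum_fun_apply fscal_apply)

lemma fext_add:
  assumes "fin f" "fin (g :: 'x \<Rightarrow> 'k::field)"
  shows "fext \<phi> (f + g) = fext \<phi> f + fext \<phi> g"
proof -
  have "finite (supp f \<union> supp g)" "supp (f + g) \<subseteq> supp f \<union> supp g"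
    using assms by (auto simp: supp_def)
  then show ?thesis
    by (simp add: fext_eq_sum_over[of "supp f \<union> supp g"] fun_eq_iff algebra_simps sum.distrib)
qed

lemma fext_diff:
  assumes "fin f" "fin (g :: 'x \<Rightarrow> 'k::field)"
  shows "fext \<phi> (f - g) = fext \<phi> f - fext \<phi> g"
proof -
  have "finite (supp f \<union> supp g)" "supp (f - g) \<subseteq> supp f \<union> supp g"
    using assms by (auto simp: supp_def)
  then show ?thesis
    by (simp add: fext_eq_sum_over[of "supp f \<union> supp g"] fun_eq_iff algebra_simps sum_subtractf)
qed

lemma fext_fscal:
  assumes "fin (f :: 'x \<Rightarrow> 'k::field)"
  shows "fext \<phi> (fscal k f) = fscal k (fext \<phi> f)"
proof -
  have "supp (fscal k f) \<subseteq> supp f"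
    by (auto simp: supp_def fscal_apply)
  then have "fext \<phi> (fscal k f) = (\<lambda>y. \<Sum>x\<in>supp f. fscal k f x * \<phi> x y)"
    using assms by (intro fext_eq_sum_over)
  then show ?thesis
    by (simp add: fun_eq_iff fext_def sum_distrib_left algebra_simps fscal_apply)
qed

lemma fext_zero [simp]: "fext \<phi> (0 :: 'x \<Rightarrow> 'k::field) = 0"
  by (simp add: fext_def fun_eq_iff)

lemma fext_sum:
  "finite A \<Longrightarrow> (\<And>a. a \<in> A \<Longrightarrow> fin (g a)) \<Longrightarrow>
    fext \<psi> (\<Sum>a\<in>A. g a :: 'x \<Rightarrow> 'k::field) = (\<Sum>a\<in>A. fext \<psi> (g a))"
  by (induct A rule: finite_induct) (auto simp: fext_add fin_sum)

lemma fext_fdelta [simp]: "fext \<phi> (fdelta a) = \<phi> a"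
  by (simp add: fext_eq_sum_over[of "{a}"] supp_def fdelta_def)

lemma fin_fext:
  "fin (f :: 'x \<Rightarrow> 'k::field) \<Longrightarrow> (\<And>x. x \<in> supp f \<Longrightarrow> fin (\<phi> x)) \<Longrightarrow> fin (fext \<phi> f)"
  unfolding fext_eq_sum by (intro fin_sum fin_fscal) auto

lemma fext_fdelta_self: "fin (f :: 'x \<Rightarrow> 'k::field) \<Longrightarrow> fext fdelta f = f"
proof
  fix y
  assume "fin f"
  then have "fext fdelta f y = (\<Sum>x\<in>insert y (supp f). f x * fdelta x y)"
    by (subst fext_eq_sum_over[of "insert y (supp f)"]) auto
  also have "\<dots> = f y"
    using \<open>fin f\<close> by (simp add: fdelta_def if_distrib[of "(*) _"] eq_commute[of y] cong: if_cong)
  finally show "fext fdelta f y = f y" .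
qed

lemma fext_fext:
  "fin (f :: 'x \<Rightarrow> 'k::field) \<Longrightarrow> (\<And>x. x \<in> supp f \<Longrightarrow> fin (\<phi> x)) \<Longrightarrow>
    fext \<psi> (fext \<phi> f) = fext (\<lambda>x. fext \<psi> (\<phi> x)) f"
  unfolding fext_eq_sum[of \<phi>] fext_eq_sum[of "\<lambda>x. fext \<psi> (\<phi> x)"]
  by (subst fext_sum) (auto intro: fin_fscal simp: fext_fscal)

lemma fext_cong: "(\<And>x. x \<in> supp f \<Longrightarrow> \<phi> x = \<psi> x) \<Longrightarrow> fext \<phi> f = fext \<psi> f"
  unfolding fext_def by (auto simp: fun_eq_iff intro!: sum.cong)

lemma fext_add_fun: "fext (\<lambda>v. \<phi> v + \<psi> v) w = fext \<phi> w + fext \<psi> w"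
  by (simp add: fext_def fun_eq_iff algebra_simps sum.distrib)

lemma fext_fscal_fun: "fext (\<lambda>v. fscal k (\<phi> v)) (w :: 'x \<Rightarrow> 'k::field) = fscal k (fext \<phi> w)"
  by (simp add: fext_def fun_eq_iff algebra_simps sum_distrib_left fscal_apply)

lemma fext_in_span:
  "(\<And>x. x \<in> supp (f :: 'x \<Rightarrow> 'k::field) \<Longrightarrow> \<phi> x \<in> fcomb.span R) \<Longrightarrow> fext \<phi> f \<in> fcomb.span R"
  unfolding fext_eq_sum by (intro fcomb.span_sum fcomb.span_scale) auto

lemma teq_fext_cong:
  assumes "\<And>x. x \<in> supp (f :: 'x \<Rightarrow> 'k::field) \<Longrightarrow> teq R (\<phi> x) (\<psi> x)"
  shows "teq R (fext \<phi> f) (fext \<psi> f)"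
proof -
  have "fext \<phi> f - fext \<psi> f = fext (\<lambda>x. \<phi> x - \<psi> x) f"
    by (simp add: fext_def fun_eq_iff algebra_simps sum_subtractf)
  then show ?thesis
    using assms by (simp add: teq_iff_span fext_in_span)
qed

lemma fext_swap: "fext (\<lambda>u. fext (\<lambda>v. \<psi> u v) g) f = fext (\<lambda>v. fext (\<lambda>u. \<psi> u v) f) g"
  by (simp add: fun_eq_iff fext_def sum_distrib_left algebra_simps sum.swap[of _ "supp f"])

lemma fmap_eq_fext: "fin (f :: 'x \<Rightarrow> 'k::field) \<Longrightarrow> fmap h f = fext (\<lambda>x. fdelta (h x)) f"
  unfolding fmap_def fext_def fdelta_def
  by (auto simp: fun_eq_iff sum.inter_filter eq_commute intro!: sum.cong)

lemma fin_fmap: "fin (f :: 'x \<Rightarrow> 'k::field) \<Longrightarrow> fin (fmap h f)"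
  by (simp add: fmap_eq_fext fin_fext)

lemma supp_ftens: "supp (ftens a (b :: 'y \<Rightarrow> 'k::field)) \<subseteq> supp a \<times> supp b"
  by (auto simp: supp_def ftens_def)

lemma fin_ftens: "fin (a :: 'x \<Rightarrow> 'k::field) \<Longrightarrow> fin b \<Longrightarrow> fin (ftens a b)"
  by (rule finite_subset[OF supp_ftens]) auto

lemma fext_ftens:
  assumes "fin (a :: 'x \<Rightarrow> 'k::field)" "fin b"
  shows "fext \<psi> (ftens a b) = fext (\<lambda>u. fext (\<lambda>v. \<psi> (u, v)) b) a"
proof -
  have "fext \<psi> (ftens a b) = (\<lambda>y. \<Sum>x\<in>supp a \<times> supp b. ftens a b x * \<psi> x y)"
    using assms supp_ftens[of a b] by (intro fext_eq_sum_over) auto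
  then show ?thesis
    by (simp add: fun_eq_iff fext_def sum.cartesian_product' ftens_def sum_distrib_left
        algebra_simps)
qed

lemma fmap_ftens:
  "fin (a :: 'x \<Rightarrow> 'k::field) \<Longrightarrow> fin b \<Longrightarrow>
    fmap m (ftens a b) = fext (\<lambda>u. fext (\<lambda>v. fdelta (m (u, v))) b) a"
  by (simp add: fmap_eq_fext fin_ftens fext_ftens)

lemma fext_fext_fdelta:
  assumes "fin (a :: 'x \<Rightarrow> 'k::field)" "fin b"
  shows "fext \<psi> (fext (\<lambda>u. fext (\<lambda>v. fdelta (m u v)) b) a) = fext (\<lambda>u. fext (\<lambda>v. \<psi> (m u v)) b) a"
  using assms by (simp add: fext_fext fin_fext cong: fext_cong)

section \<open>Maps descending to tensor products\<close>

definition rels_fin :: "('x \<Rightarrow> 'k::zero) set \<Rightarrow> bool" where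
  "rels_fin R \<longleftrightarrow> (\<forall>r\<in>R. fin r)"

definition preserves_rels :: "('x \<Rightarrow> 'y \<Rightarrow> 'k::field) \<Rightarrow> ('x \<Rightarrow> 'k) set \<Rightarrow> ('y \<Rightarrow> 'k) set \<Rightarrow> bool" where
  "preserves_rels \<phi> R R' \<longleftrightarrow> (\<forall>r\<in>R. fext \<phi> r \<in> fcomb.span R')"

lemma teq_fext_preserves:
  assumes "rels_fin R" "preserves_rels \<phi> R R'" "fin f" "fin g" "teq R f g"
  shows "teq R' (fext \<phi> f) (fext \<phi> g)"
proof -
  have "f - g \<in> fcomb.span R"
    using assms(5) by (simp add: teq_iff_span)
  then have "fin (f - g) \<and> fext \<phi> (f - g) \<in> fcomb.span R'"
  proof (induct rule: fcomb.span_induct_alt)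
    case base
    then show ?case by (simp add: fcomb.span_zero)
  next
    case (step c x y)
    have "fin x"
      using step(1) assms(1) by (simp add: rels_fin_def)
    moreover have "fext \<phi> x \<in> fcomb.span R'"
      using step(1) assms(2) by (simp add: preserves_rels_def)
    ultimately have "fin (fscal c x + y) \<and> fext \<phi> (fscal c x + y) \<in> fcomb.span R'"
      using step(2) by (simp add: fext_add fin_fscal fext_fscal fin_add fcomb.span_add
          fcomb.span_scale)
    then show ?case
      by (simp add: plus_fun_def)
  qed
  then show ?thesis
    using assms(3,4) by (simp add: teq_iff_span fext_diff)
qed

lemma fdelta_combination_eqs:
  "(\<lambda>y. fdelta a y - fdelta b y - fdelta c y) = fdelta a - (fdelta b + fdelta c :: _ \<Rightarrow> 'k::field)"
  "(\<lambda>y. fdelta a y - k * fdelta b y) = fdelta a - fscal k (fdelta b)"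
  "(\<lambda>y. fdelta a y - fdelta b y) = fdelta a - (fdelta b :: _ \<Rightarrow> 'k::field)"
  by (simp_all add: fun_eq_iff fscal_apply)

lemma fin_linrels: "r \<in> linrels g s \<Longrightarrow> fin (r :: _ \<Rightarrow> 'k::field)"
  unfolding linrels_def by (auto simp: fdelta_combination_eqs intro!: fin_diff fin_add fin_fscal)

lemma rels_fin_rels2: "rels_fin (rels2 sA sB :: (_ \<Rightarrow> 'k::field) set)"
  unfolding rels_fin_def rels2_def by (auto intro: fin_linrels)

lemma rels_fin_rels3: "rels_fin (rels3 sA sB sC :: (_ \<Rightarrow> 'k::field) set)"
  unfolding rels_fin_def rels3_def by (auto intro: fin_linrels)

lemma rels_fin_relsPBP: "rels_fin (relsPBP sP B :: (_ \<Rightarrow> 'k::field) set)"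
  using rels_fin_rels2
  unfolding rels_fin_def relsPBP_def balrels2_def by (auto simp: fdelta_combination_eqs intro!: fin_diff)

lemma rels_fin_relsHPBP: "rels_fin (relsHPBP sH sP B :: (_ \<Rightarrow> 'k::field) set)"
  using rels_fin_rels3
  unfolding rels_fin_def relsHPBP_def balrels3_def by (auto simp: fdelta_combination_eqs intro!: fin_diff)

lemma linrels_subset_rels2:
  "linrels (\<lambda>a. (a, b)) sA \<subseteq> rels2 sA sB"
  "linrels (\<lambda>b. (a, b)) sB \<subseteq> rels2 sA sB"
  unfolding rels2_def by auto

lemma linrels_subset_rels3:
  "linrels (\<lambda>a. (a, b, c)) sA \<subseteq> rels3 sA sB sC"
  "linrels (\<lambda>b. (a, b, c)) sB \<subseteq> rels3 sA sB sC"
  "linrels (\<lambda>c. (a, b, c)) sC \<subseteq> rels3 sA sB sC"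
  unfolding rels3_def by auto

lemma linrels_subset_relsHPBP:
  "linrels (\<lambda>a. (a, b, c)) sH \<subseteq> relsHPBP sH sP B"
  "linrels (\<lambda>b. (a, b, c)) sP \<subseteq> relsHPBP sH sP B"
  "linrels (\<lambda>c. (a, b, c)) sP \<subseteq> relsHPBP sH sP B"
  unfolding relsHPBP_def rels3_def by auto

lemma balrel_relsHPBP:
  "b \<in> B \<Longrightarrow> teq (relsHPBP sH sP B :: (_ \<Rightarrow> 'k::field) set) (fdelta (h, x * b, y)) (fdelta (h, x, b * y))"
  unfolding relsHPBP_def balrels3_def
  by (intro teq_if_rel) (auto simp: fdelta_combination_eqs(3)[symmetric])

lemma teq_linrels_add:
  "linrels g s \<subseteq> (R :: (_ \<Rightarrow> 'k::field) set) \<Longrightarrow>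
    teq R (fdelta (g (a + a'))) (fdelta (g a) + fdelta (g a'))"
  unfolding linrels_def by (rule teq_if_rel) (auto simp: fdelta_combination_eqs(1)[symmetric])

lemma teq_linrels_scale:
  "linrels g s \<subseteq> (R :: (_ \<Rightarrow> 'k::field) set) \<Longrightarrow> teq R (fdelta (g (s k a))) (fscal k (fdelta (g a)))"
  unfolding linrels_def by (rule teq_if_rel) (auto simp: fdelta_combination_eqs(2)[symmetric])

lemma teq_linrels_zero:
  assumes "linrels g s \<subseteq> (R :: (_ \<Rightarrow> 'k::field) set)"
  shows "teq R 0 (fdelta (g (0 :: 'a::monoid_add)))"
proof -
  have "fdelta (g 0) - (fdelta (g 0) + fdelta (g 0)) \<in> fcomb.span R"
    using teq_linrels_add[OF assms, of 0 0] by (simp add: teq_iff_span)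
  then show ?thesis
    by (simp add: teq_iff_span fcomb.span_neg)
qed

lemma teq_linrels_sum:
  assumes "linrels g s \<subseteq> (R :: (_ \<Rightarrow> 'k::field) set)" "finite A"
  shows "teq R (\<Sum>z\<in>A. fscal (c z) (fdelta (g (v z))))
               (fdelta (g (\<Sum>z\<in>A. s (c z) (v z) :: 'a::comm_monoid_add)))"
  using assms(2)
proof (induct A rule: finite_induct)
  case empty
  then show ?case using teq_linrels_zero[OF assms(1)] by simp
next
  case (insert z A)
  have "teq R (fscal (c z) (fdelta (g (v z))) + (\<Sum>z\<in>A. fscal (c z) (fdelta (g (v z)))))
             (fdelta (g (s (c z) (v z))) + fdelta (g (\<Sum>z\<in>A. s (c z) (v z))))"
    by (rule teq_add[OF teq_sym[OF teq_linrels_scale[OF assms(1)]] insert(3)])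
  also have "teq R \<dots> (fdelta (g (s (c z) (v z) + (\<Sum>z\<in>A. s (c z) (v z)))))"
    by (rule teq_sym[OF teq_linrels_add[OF assms(1)]])
  finally show ?case
    unfolding sum.insert[OF insert(1,2)] .
qed

lemma teq_rels2_slots:
  fixes sA :: "'k::field \<Rightarrow> 'a::plus \<Rightarrow> 'a" and sB :: "'k \<Rightarrow> 'b::plus \<Rightarrow> 'b"
  defines "R \<equiv> rels2 sA sB"
  shows "teq R (fdelta (a + a', b)) (fdelta (a, b) + fdelta (a', b))"
    and "teq R (fdelta (sA k a, b)) (fscal k (fdelta (a, b)))"
    and "teq R (fdelta (a, b + b')) (fdelta (a, b) + fdelta (a, b'))"
    and "teq R (fdelta (a, sB k b)) (fscal k (fdelta (a, b)))"
  unfolding R_def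
  by (rule teq_linrels_add teq_linrels_scale, rule linrels_subset_rels2)+

lemma teq_rels3_slots:
  fixes sA :: "'k::field \<Rightarrow> 'a::plus \<Rightarrow> 'a" and sB :: "'k \<Rightarrow> 'b::plus \<Rightarrow> 'b"
    and sC :: "'k \<Rightarrow> 'c::plus \<Rightarrow> 'c"
  defines "R \<equiv> rels3 sA sB sC"
  shows "teq R (fdelta (a + a', b, c)) (fdelta (a, b, c) + fdelta (a', b, c))"
    and "teq R (fdelta (sA k a, b, c)) (fscal k (fdelta (a, b, c)))"
    and "teq R (fdelta (a, b + b', c)) (fdelta (a, b, c) + fdelta (a, b', c))"
    and "teq R (fdelta (a, sB k b, c)) (fscal k (fdelta (a, b, c)))"
    and "teq R (fdelta (a, b, c + c')) (fdelta (a, b, c) + fdelta (a, b, c'))"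
    and "teq R (fdelta (a, b, sC k c)) (fscal k (fdelta (a, b, c)))"
  unfolding R_def
  by (rule teq_linrels_add teq_linrels_scale, rule linrels_subset_rels3)+

lemma teq_relsHPBP_slots:
  fixes sH :: "'k::field \<Rightarrow> 'h::plus \<Rightarrow> 'h" and sP :: "'k \<Rightarrow> 'p::{plus,times} \<Rightarrow> 'p"
    and B :: "'p set"
  defines "R \<equiv> relsHPBP sH sP B"
  shows "teq R (fdelta (a + a', b, c)) (fdelta (a, b, c) + fdelta (a', b, c))"
    and "teq R (fdelta (sH k a, b, c)) (fscal k (fdelta (a, b, c)))"
    and "teq R (fdelta (a, b + b', c)) (fdelta (a, b, c) + fdelta (a, b', c))"
    and "teq R (fdelta (a, sP k b, c)) (fscal k (fdelta (a, b, c)))"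
    and "teq R (fdelta (a, b, c + c')) (fdelta (a, b, c) + fdelta (a, b, c'))"
    and "teq R (fdelta (a, b, sP k c)) (fscal k (fdelta (a, b, c)))"
  unfolding R_def
  by (rule teq_linrels_add teq_linrels_scale, rule linrels_subset_relsHPBP)+

lemma preserves_linrels:
  assumes "\<And>a a'. teq R' (\<phi> (g (a + a'))) (\<phi> (g a) + \<phi> (g a'))"
    and "\<And>k a. teq R' (\<phi> (g (s k a))) (fscal k (\<phi> (g a)))"
  shows "preserves_rels (\<phi> :: _ \<Rightarrow> _ \<Rightarrow> 'k::field) (linrels g s) R'"
  unfolding preserves_rels_def linrels_def
proof safe
  fix a a'
  show "fext \<phi> (\<lambda>y. fdelta (g (a + a')) y - fdelta (g a) y - fdelta (g a') y) \<in> fcomb.span R'"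
    using assms(1)[of a a']
    by (simp add: fdelta_combination_eqs fext_diff fext_add fin_add teq_iff_span)
next
  fix k a
  show "fext \<phi> (\<lambda>y. fdelta (g (s k a)) y - k * fdelta (g a) y) \<in> fcomb.span R'"
    using assms(2)[of k a]
    by (simp add: fdelta_combination_eqs fext_diff fext_fscal fin_fscal teq_iff_span)
qed

lemma preserves_rels2:
  fixes \<phi> :: "'a::plus \<times> 'b::plus \<Rightarrow> 'y \<Rightarrow> 'k::field"
  assumes "\<And>a a' b. teq R' (\<phi> (a + a', b)) (\<phi> (a, b) + \<phi> (a', b))"
    and "\<And>k a b. teq R' (\<phi> (sA k a, b)) (fscal k (\<phi> (a, b)))"
    and "\<And>a b b'. teq R' (\<phi> (a, b + b')) (\<phi> (a, b) + \<phi> (a, b'))"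
    and "\<And>k a b. teq R' (\<phi> (a, sB k b)) (fscal k (\<phi> (a, b)))"
  shows "preserves_rels \<phi> (rels2 sA sB) R'"
  unfolding preserves_rels_def rels2_def
proof safe
  fix r and b :: 'b
  assume "r \<in> linrels (\<lambda>a. (a, b)) sA"
  with assms(1,2) show "fext \<phi> r \<in> fcomb.span R'"
    using preserves_linrels[of R' \<phi> "\<lambda>a. (a, b)" sA] by (auto simp: preserves_rels_def)
next
  fix r and a :: 'a
  assume "r \<in> linrels (\<lambda>b. (a, b)) sB"
  with assms(3,4) show "fext \<phi> r \<in> fcomb.span R'"
    using preserves_linrels[of R' \<phi> "\<lambda>b. (a, b)" sB] by (auto simp: preserves_rels_def)
qed

lemma preserves_rels3:
  fixes \<phi> :: "'a::plus \<times> 'b::plus \<times> 'c::plus \<Rightarrow> 'y \<Rightarrow> 'k::field"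
  assumes "\<And>a a' b c. teq R' (\<phi> (a + a', b, c)) (\<phi> (a, b, c) + \<phi> (a', b, c))"
    and "\<And>k a b c. teq R' (\<phi> (sA k a, b, c)) (fscal k (\<phi> (a, b, c)))"
    and "\<And>a b b' c. teq R' (\<phi> (a, b + b', c)) (\<phi> (a, b, c) + \<phi> (a, b', c))"
    and "\<And>k a b c. teq R' (\<phi> (a, sB k b, c)) (fscal k (\<phi> (a, b, c)))"
    and "\<And>a b c c'. teq R' (\<phi> (a, b, c + c')) (\<phi> (a, b, c) + \<phi> (a, b, c'))"
    and "\<And>k a b c. teq R' (\<phi> (a, b, sC k c)) (fscal k (\<phi> (a, b, c)))"
  shows "preserves_rels \<phi> (rels3 sA sB sC) R'"
  unfolding preserves_rels_def rels3_def
proof safe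
  fix r and b :: 'b and c :: 'c
  assume "r \<in> linrels (\<lambda>a. (a, b, c)) sA"
  with assms(1,2) show "fext \<phi> r \<in> fcomb.span R'"
    using preserves_linrels[of R' \<phi> "\<lambda>a. (a, b, c)" sA] by (auto simp: preserves_rels_def)
next
  fix r and a :: 'a and c :: 'c
  assume "r \<in> linrels (\<lambda>b. (a, b, c)) sB"
  with assms(3,4) show "fext \<phi> r \<in> fcomb.span R'"
    using preserves_linrels[of R' \<phi> "\<lambda>b. (a, b, c)" sB] by (auto simp: preserves_rels_def)
next
  fix r and a :: 'a and b :: 'b
  assume "r \<in> linrels (\<lambda>c. (a, b, c)) sC"
  with assms(5,6) show "fext \<phi> r \<in> fcomb.span R'"
    using preserves_linrels[of R' \<phi> "\<lambda>c. (a, b, c)" sC] by (auto simp: preserves_rels_def)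
qed

lemma preserves_relsPBP:
  assumes "preserves_rels \<phi> (rels2 sP sP) R'"
    and "\<And>x y b. b \<in> B \<Longrightarrow> teq R' (\<phi> (x * b, y)) (\<phi> (x, b * y))"
  shows "preserves_rels (\<phi> :: _ \<Rightarrow> _ \<Rightarrow> 'k::field) (relsPBP sP B) R'"
  using assms unfolding preserves_rels_def relsPBP_def balrels2_def
  by (auto simp: fdelta_combination_eqs(3) fext_diff teq_iff_span)

lemma preserves_relsHPBP:
  assumes "preserves_rels \<phi> (rels3 sH sP sP) R'"
    and "\<And>h x y b. b \<in> B \<Longrightarrow> teq R' (\<phi> (h, x * b, y)) (\<phi> (h, x, b * y))"
  shows "preserves_rels (\<phi> :: _ \<Rightarrow> _ \<Rightarrow> 'k::field) (relsHPBP sH sP B) R'"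
  using assms unfolding preserves_rels_def relsHPBP_def balrels3_def
  by (auto simp: fdelta_combination_eqs(3) fext_diff teq_iff_span)

definition fprefix :: "'h \<Rightarrow> ('z \<Rightarrow> 'k::field) \<Rightarrow> 'h \<times> 'z \<Rightarrow> 'k" where
  "fprefix h u = fext (\<lambda>z. fdelta (h, z)) u"

definition fsuffix :: "'c \<Rightarrow> ('a \<times> 'b \<Rightarrow> 'k::field) \<Rightarrow> 'a \<times> 'b \<times> 'c \<Rightarrow> 'k" where
  "fsuffix c v = fext (\<lambda>w. fdelta (fst w, snd w, c)) v"

lemma fin_fprefix [simp]: "fin u \<Longrightarrow> fin (fprefix h u)"
  unfolding fprefix_def by (rule fin_fext) auto

lemma fprefix_fdelta [simp]: "fprefix h (fdelta z) = fdelta (h, z)"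
  by (simp add: fprefix_def)

lemma fext_fprefix: "fin u \<Longrightarrow> fext \<psi> (fprefix h u) = fext (\<lambda>z. \<psi> (h, z)) u"
  unfolding fprefix_def by (subst fext_fext) auto

lemma fprefix_fext:
  "fin u \<Longrightarrow> (\<And>x. x \<in> supp u \<Longrightarrow> fin (\<phi> x)) \<Longrightarrow> fprefix h (fext \<phi> u) = fext (\<lambda>x. fprefix h (\<phi> x)) u"
  unfolding fprefix_def by (rule fext_fext)

lemma fprefix_add: "fin u \<Longrightarrow> fin v \<Longrightarrow> fprefix h (u + v) = fprefix h u + fprefix h v"
  unfolding fprefix_def by (rule fext_add)

lemma fprefix_fscal: "fin u \<Longrightarrow> fprefix h (fscal k u) = fscal k (fprefix h u)"
  unfolding fprefix_def by (rule fext_fscal)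

lemma ftens_fdelta_left: "fin (w :: _ \<Rightarrow> 'k::field) \<Longrightarrow> ftens (fdelta a) w = fprefix a w"
  using fext_ftens[of "fdelta a" w fdelta]
  by (simp add: fext_fdelta_self fin_ftens fprefix_def)

lemma fmap_Pair_eq_fprefix: "fin t \<Longrightarrow> fmap (Pair h) t = fprefix h t"
  unfolding fprefix_def by (simp add: fmap_eq_fext)

lemma preserves_fprefix_relsPBP: "preserves_rels (\<lambda>z. fdelta (h, z)) (relsPBP sP B) (relsHPBP sH sP B)"
proof (rule preserves_relsPBP)
  show "preserves_rels (\<lambda>z. fdelta (h, z)) (rels2 sP sP) (relsHPBP sH sP B)"
    by (rule preserves_rels2)
      (simp_all add: teq_relsHPBP_slots)
qed (rule balrel_relsHPBP)

lemma preserves_fprefix_rels2: "preserves_rels (\<lambda>z. fdelta (h, z)) (rels2 sA sB) (rels3 sH sA sB)"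
  by (rule preserves_rels2) (simp_all add: teq_rels3_slots)

lemma teq_fprefix_relsPBP:
  "fin u \<Longrightarrow> fin v \<Longrightarrow> teq (relsPBP sP B) u v \<Longrightarrow>
    teq (relsHPBP sH sP B) (fprefix h u) (fprefix h v)"
  unfolding fprefix_def by (rule teq_fext_preserves[OF rels_fin_relsPBP preserves_fprefix_relsPBP])

lemma teq_fprefix_rels2:
  "fin u \<Longrightarrow> fin v \<Longrightarrow> teq (rels2 sA sB) u v \<Longrightarrow> teq (rels3 sH sA sB) (fprefix h u) (fprefix h v)"
  unfolding fprefix_def by (rule teq_fext_preserves[OF rels_fin_rels2 preserves_fprefix_rels2])

lemma fin_fsuffix [simp]: "fin v \<Longrightarrow> fin (fsuffix c v)"
  unfolding fsuffix_def by (rule fin_fext) auto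

lemma fsuffix_add: "fin u \<Longrightarrow> fin v \<Longrightarrow> fsuffix c (u + v) = fsuffix c u + fsuffix c v"
  unfolding fsuffix_def by (rule fext_add)

lemma fsuffix_fscal: "fin u \<Longrightarrow> fsuffix c (fscal k u) = fscal k (fsuffix c u)"
  unfolding fsuffix_def by (rule fext_fscal)

lemma preserves_fsuffix_rels2:
  "preserves_rels (\<lambda>w. fdelta (fst w, snd w, c)) (rels2 sA sB) (rels3 sA sB sC)"
  by (rule preserves_rels2) (simp_all add: teq_rels3_slots)

lemma teq_fsuffix_rels2:
  "fin u \<Longrightarrow> fin v \<Longrightarrow> teq (rels2 sA sB) u v \<Longrightarrow> teq (rels3 sA sB sC) (fsuffix c u) (fsuffix c v)"
  unfolding fsuffix_def by (rule teq_fext_preserves[OF rels_fin_rels2 preserves_fsuffix_rels2])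

lemma tens_left_eq_fext:
  "(\<And>a. fin (\<phi> a :: _ \<Rightarrow> 'k::field)) \<Longrightarrow> tens_left \<phi> t = fext (\<lambda>w. fsuffix (snd w) (\<phi> (fst w))) t"
  unfolding tens_left_def fsuffix_def
  by (rule fext_cong) (simp add: split_beta fmap_ftens)

lemma tens_right_eq_fext:
  "(\<And>b. fin (\<psi> b :: _ \<Rightarrow> 'k::field)) \<Longrightarrow> tens_right \<psi> t = fext (\<lambda>w. fprefix (fst w) (\<psi> (snd w))) t"
  unfolding tens_right_def
  by (rule fext_cong) (simp add: split_beta ftens_fdelta_left)

lemma tmul_eq_fext:
  "fin (f :: _ \<Rightarrow> 'k::field) \<Longrightarrow> fin g \<Longrightarrow>
    tmul f g = fext (\<lambda>u. fext (\<lambda>v. fdelta (fst u * fst v, snd u * snd v)) g) f"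
  unfolding tmul_def by (simp add: fmap_ftens split_beta)

lemma fin_tmul: "fin (f :: _ \<Rightarrow> 'k::field) \<Longrightarrow> fin g \<Longrightarrow> fin (tmul f g)"
  unfolding tmul_def by (intro fin_fmap fin_ftens)

lemma lmulPC_eq_fext: "fin (u :: _ \<Rightarrow> 'k::field) \<Longrightarrow> lmulPC x u = fext (\<lambda>w. fdelta (x * fst w, snd w)) u"
  unfolding lmulPC_def by (simp add: fmap_eq_fext split_beta)

lemma k_algebra_scale_mult:
  assumes "k_algebra s"
  shows "s k (x * y) = s k x * y" and "s k (x * y) = x * s k y"
  using assms unfolding k_algebra_def by blast+

lemma preserves_tmul_left:
  assumes "k_algebra sA" "k_algebra sB"
  shows "preserves_rels (\<lambda>u. fext (\<lambda>v. fdelta (fst u * fst v, snd u * snd v)) w)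
    (rels2 sA sB) (rels2 sA sB :: (_ \<Rightarrow> 'k::field) set)"
  by (rule preserves_rels2;
      simp only: fst_conv snd_conv fext_add_fun[symmetric] fext_fscal_fun[symmetric];
      rule teq_fext_cong;
      simp add: distrib_right k_algebra_scale_mult(1)[OF assms(1), symmetric]
        k_algebra_scale_mult(1)[OF assms(2), symmetric] teq_rels2_slots)

lemma teq_tmul_left:
  assumes "k_algebra sA" "k_algebra sB" "fin u" "fin u'" "fin w" "teq (rels2 sA sB) u u'"
  shows "teq (rels2 sA sB) (tmul u w) (tmul u' w)"
  using assms by (simp add: tmul_eq_fext teq_fext_preserves[OF rels_fin_rels2 preserves_tmul_left])

section \<open>Galois extensions by bicomodule algebras\<close>

locale galois_bicomodule_algebra =
  fixes sC :: "'k::field \<Rightarrow> 'c::ab_group_add \<Rightarrow> 'c"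
    and \<Delta>C :: "'c \<Rightarrow> 'c \<times> 'c \<Rightarrow> 'k" and \<epsilon>C :: "'c \<Rightarrow> 'k"
    and sH :: "'k \<Rightarrow> 'h::{ring,monoid_mult} \<Rightarrow> 'h"
    and \<Delta>H :: "'h \<Rightarrow> 'h \<times> 'h \<Rightarrow> 'k" and \<epsilon>H :: "'h \<Rightarrow> 'k"
    and sP :: "'k \<Rightarrow> 'p::{ring,monoid_mult} \<Rightarrow> 'p"
    and \<rho>H :: "'p \<Rightarrow> 'h \<times> 'p \<Rightarrow> 'k" and \<rho>C :: "'p \<Rightarrow> 'p \<times> 'c \<Rightarrow> 'k"
  assumes bialgebra_H: "bialgebra sH \<Delta>H \<epsilon>H"
    and k_algebra_P: "k_algebra sP"
    and bicomodule_P: "bicomodule sH \<Delta>H \<epsilon>H sC \<Delta>C \<epsilon>C sP \<rho>H \<rho>C"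
    and coaction_mult: "coaction_alg_map sH sP \<rho>H"
    and galois_P: "galois sC sP \<rho>C"
    and coinv_subset: "coinvC sC sP \<rho>C \<subseteq> coinvH sH sP \<rho>H"
begin

abbreviation "B \<equiv> coinvC sC sP \<rho>C"
abbreviation "RHP \<equiv> rels2 sH sP"
abbreviation "RPC \<equiv> rels2 sP sC"
abbreviation "RHPC \<equiv> rels3 sH sP sC"
abbreviation "RPBP \<equiv> relsPBP sP B"
abbreviation "RHPBP \<equiv> relsHPBP sH sP B"

lemma k_algebra_H: "k_algebra sH"
  using bialgebra_H by (simp add: bialgebra_def)

lemmas scaleH_mult = k_algebra_scale_mult[OF k_algebra_H]
lemmas scaleP_mult = k_algebra_scale_mult[OF k_algebra_P]

lemma left_comodule_P: "left_comodule sH \<Delta>H \<epsilon>H sP \<rho>H"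
  using bicomodule_P by (simp add: bicomodule_def)

lemma right_comodule_P: "right_comodule sC \<Delta>C \<epsilon>C sP \<rho>C"
  using bicomodule_P by (simp add: bicomodule_def)

lemma coactions_commute: "teq RHPC (tens_right \<rho>C (\<rho>H x)) (tens_left \<rho>H (\<rho>C x))"
  using bicomodule_P by (simp add: bicomodule_def)

lemma fin_\<rho>H [simp]: "fin (\<rho>H x)"
  using left_comodule_P by (simp add: left_comodule_def lin_mod_def)

lemma fin_\<rho>C [simp]: "fin (\<rho>C x)"
  using right_comodule_P by (simp add: right_comodule_def lin_mod_def)

lemma fin_\<Delta>H [simp]: "fin (\<Delta>H x)"
  using bialgebra_H by (simp add: bialgebra_def coalgebra_def lin_mod_def)

lemma \<rho>H_add: "teq RHP (\<rho>H (x + y)) (\<rho>H x + \<rho>H y)"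
  using left_comodule_P by (simp add: left_comodule_def lin_mod_def fadd_eq_plus)

lemma \<rho>H_scale: "teq RHP (\<rho>H (sP k x)) (fscal k (\<rho>H x))"
  using left_comodule_P by (simp add: left_comodule_def lin_mod_def)

lemma \<rho>H_coassoc: "teq (rels3 sH sH sP) (tens_left \<Delta>H (\<rho>H x)) (tens_right \<rho>H (\<rho>H x))"
  using left_comodule_P by (simp add: left_comodule_def)

lemma \<rho>H_counit: "(\<Sum>z\<in>supp (\<rho>H x). sP (\<rho>H x z * \<epsilon>H (fst z)) (snd z)) = x"
  using left_comodule_P by (simp add: left_comodule_def)

lemma \<rho>H_mult: "teq RHP (\<rho>H (x * y)) (tmul (\<rho>H x) (\<rho>H y))"
  using coaction_mult by (simp add: coaction_alg_map_def)

lemma \<rho>H_one: "teq RHP (\<rho>H 1) (fdelta (1, 1))"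
  using coaction_mult by (simp add: coaction_alg_map_def)

lemma \<rho>H_coinv: "b \<in> B \<Longrightarrow> teq RHP (\<rho>H b) (fdelta (1, b))"
  using coinv_subset by (auto simp: coinvH_def)

lemma can_inj: "fin t \<Longrightarrow> fin t' \<Longrightarrow> teq RPC (can \<rho>C t) (can \<rho>C t') \<Longrightarrow> teq RPBP t t'"
  using galois_P by (simp add: galois_def)

lemma can_surj: "fin u \<Longrightarrow> \<exists>t. fin t \<and> teq RPC (can \<rho>C t) u"
  using galois_P by (simp add: galois_def)

definition can_gen :: "'p \<times> 'p \<Rightarrow> 'p \<times> 'c \<Rightarrow> 'k" where
  "can_gen z = lmulPC (fst z) (\<rho>C (snd z))"

lemma fin_can_gen [simp]: "fin (can_gen z)"
  by (simp add: can_gen_def lmulPC_def fin_fmap)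

lemma can_eq_fext: "can \<rho>C t = fext can_gen t"
  unfolding can_def can_gen_def by (simp add: case_prod_unfold)

lemma fin_can: "fin t \<Longrightarrow> fin (can \<rho>C t)"
  unfolding can_eq_fext by (rule fin_fext) auto

lemma can_add: "fin t \<Longrightarrow> fin t' \<Longrightarrow> can \<rho>C (t + t') = can \<rho>C t + can \<rho>C t'"
  unfolding can_eq_fext by (rule fext_add)

lemma can_fscal: "fin t \<Longrightarrow> can \<rho>C (fscal k t) = fscal k (can \<rho>C t)"
  unfolding can_eq_fext by (rule fext_fscal)

definition can_inv :: "'p \<times> 'c \<Rightarrow> 'p \<times> 'p \<Rightarrow> 'k" where
  "can_inv z = (SOME t. fin t \<and> teq RPC (can \<rho>C t) (fdelta z))"

lemma can_inv: "fin (can_inv z)" "teq RPC (can \<rho>C (can_inv z)) (fdelta z)"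
proof -
  have "\<exists>t. fin t \<and> teq RPC (can \<rho>C t) (fdelta z)"
    by (rule can_surj) simp
  then have "fin (can_inv z) \<and> teq RPC (can \<rho>C (can_inv z)) (fdelta z)"
    unfolding can_inv_def by (rule someI_ex)
  then show "fin (can_inv z)" "teq RPC (can \<rho>C (can_inv z)) (fdelta z)"
    by auto
qed

declare can_inv(1) [simp]

lemma can_inv_unique: "fin t \<Longrightarrow> teq RPC (fdelta z) (can \<rho>C t) \<Longrightarrow> teq RPBP (can_inv z) t"
  by (rule can_inj) (auto intro: teq_trans can_inv)

lemma can_inv_add:
  "teq RPC (fdelta z) (fdelta z1 + fdelta z2) \<Longrightarrow> teq RPBP (can_inv z) (can_inv z1 + can_inv z2)"
  by (rule can_inv_unique)
    (auto simp: can_add fin_add intro: teq_trans teq_add teq_sym[OF can_inv(2)])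

lemma can_inv_scale:
  "teq RPC (fdelta z) (fscal k (fdelta z1)) \<Longrightarrow> teq RPBP (can_inv z) (fscal k (can_inv z1))"
  by (rule can_inv_unique)
    (auto simp: can_fscal fin_fscal intro: teq_trans teq_fscal teq_sym[OF can_inv(2)])

lemma can_can_inv: "fin u \<Longrightarrow> teq RPC (can \<rho>C (fext can_inv u)) u"
proof -
  assume u: "fin u"
  have "can \<rho>C (fext can_inv u) = fext (\<lambda>z. can \<rho>C (can_inv z)) u"
    unfolding can_eq_fext using u by (intro fext_fext) auto
  moreover have "teq RPC (fext (\<lambda>z. can \<rho>C (can_inv z)) u) (fext fdelta u)"
    by (rule teq_fext_cong) (rule can_inv(2))
  ultimately show ?thesis
    using fext_fdelta_self[OF u] by simp
qed

definition id_can :: "'h \<times> 'p \<times> 'p \<Rightarrow> 'h \<times> 'p \<times> 'c \<Rightarrow> 'k" where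
  "id_can x = fprefix (fst x) (can_gen (snd x))"

definition id_can_inv :: "'h \<times> 'p \<times> 'c \<Rightarrow> 'h \<times> 'p \<times> 'p \<Rightarrow> 'k" where
  "id_can_inv x = fprefix (fst x) (can_inv (snd x))"

lemma fin_id_can [simp]: "fin (id_can x)"
  by (simp add: id_can_def)

lemma id_can_inv_id_can: "teq RHPBP (fext id_can_inv (id_can x)) (fdelta x)"
proof -
  obtain h z where x: "x = (h, z)"
    by (cases x)
  have fin_inv: "fin (fext can_inv (can_gen z))"
    by (rule fin_fext) auto
  have "fext id_can_inv (id_can x) = fprefix h (fext can_inv (can_gen z))"
    by (simp add: x id_can_def id_can_inv_def fext_fprefix fprefix_fext)
  moreover have "teq RPBP (fext can_inv (can_gen z)) (fdelta z)"
    using fin_inv can_can_inv[of "can_gen z"] by (intro can_inj) (simp_all add: can_eq_fext)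
  ultimately show ?thesis
    using fin_inv teq_fprefix_relsPBP[where u="fext can_inv (can_gen z)" and v="fdelta z" and h=h]
    by (simp add: x)
qed

lemma preserves_id_can_inv: "preserves_rels id_can_inv RHPC RHPBP"
proof (rule preserves_rels3)
  fix a a' b c
  show "teq RHPBP (id_can_inv (a + a', b, c)) (id_can_inv (a, b, c) + id_can_inv (a', b, c))"
    unfolding id_can_inv_def fprefix_def fst_conv snd_conv fext_add_fun[symmetric]
    by (rule teq_fext_cong) (simp add: split_paired_all teq_relsHPBP_slots)
next
  fix k a b c
  show "teq RHPBP (id_can_inv (sH k a, b, c)) (fscal k (id_can_inv (a, b, c)))"
    unfolding id_can_inv_def fprefix_def fst_conv snd_conv fext_fscal_fun[symmetric]
    by (rule teq_fext_cong) (simp add: split_paired_all teq_relsHPBP_slots)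
next
  fix a b b' c
  show "teq RHPBP (id_can_inv (a, b + b', c)) (id_can_inv (a, b, c) + id_can_inv (a, b', c))"
    unfolding id_can_inv_def fst_conv snd_conv fprefix_add[OF can_inv(1) can_inv(1), symmetric]
    by (rule teq_fprefix_relsPBP) (simp_all add: fin_add can_inv_add teq_rels2_slots)
next
  fix k a b c
  show "teq RHPBP (id_can_inv (a, sP k b, c)) (fscal k (id_can_inv (a, b, c)))"
    unfolding id_can_inv_def fst_conv snd_conv fprefix_fscal[OF can_inv(1), symmetric]
    by (rule teq_fprefix_relsPBP) (simp_all add: fin_fscal can_inv_scale teq_rels2_slots)
next
  fix a b c c'
  show "teq RHPBP (id_can_inv (a, b, c + c')) (id_can_inv (a, b, c) + id_can_inv (a, b, c'))"
    unfolding id_can_inv_def fst_conv snd_conv fprefix_add[OF can_inv(1) can_inv(1), symmetric]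
    by (rule teq_fprefix_relsPBP) (simp_all add: fin_add can_inv_add teq_rels2_slots)
next
  fix k a b c
  show "teq RHPBP (id_can_inv (a, b, sC k c)) (fscal k (id_can_inv (a, b, c)))"
    unfolding id_can_inv_def fst_conv snd_conv fprefix_fscal[OF can_inv(1), symmetric]
    by (rule teq_fprefix_relsPBP) (simp_all add: fin_fscal can_inv_scale teq_rels2_slots)
qed

lemma id_can_cancel:
  assumes "fin u" "fin v" "teq RHPC (fext id_can u) (fext id_can v)"
  shows "teq RHPBP u v"
proof -
  have left_inverse: "teq RHPBP (fext id_can_inv (fext id_can w)) w" if "fin w" for w
  proof -
    have "teq RHPBP (fext (\<lambda>x. fext id_can_inv (id_can x)) w) (fext fdelta w)"
      by (rule teq_fext_cong) (rule id_can_inv_id_can)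
    then show ?thesis
      using that by (simp add: fext_fext fext_fdelta_self)
  qed
  have "teq RHPBP (fext id_can_inv (fext id_can u)) (fext id_can_inv (fext id_can v))"
    using assms by (intro teq_fext_preserves[OF rels_fin_rels3 preserves_id_can_inv] fin_fext) auto
  then show ?thesis
    using left_inverse assms(1,2) by (meson teq_sym teq_trans)
qed

end

context galois_bicomodule_algebra
begin

definition diag_coact :: "'p \<times> 'p \<Rightarrow> 'h \<times> 'p \<times> 'p \<Rightarrow> 'k" where
  "diag_coact z = fmap (\<lambda>((h1, p1), (h2, q1)). (h1 * h2, p1, q1)) (ftens (\<rho>H (fst z)) (\<rho>H (snd z)))"

definition coact_gen :: "'p \<times> 'c \<Rightarrow> 'h \<times> 'p \<times> 'c \<Rightarrow> 'k" where
  "coact_gen w = fsuffix (snd w) (\<rho>H (fst w))"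

definition mult_HPC :: "'h \<times> 'p \<Rightarrow> 'h \<times> 'p \<times> 'c \<Rightarrow> 'h \<times> 'p \<times> 'c" where
  "mult_HPC u w = (fst u * fst w, snd u * fst (snd w), snd (snd w))"

lemma fin_diag_coact [simp]: "fin (diag_coact z)"
  unfolding diag_coact_def by (intro fin_fmap fin_ftens fin_\<rho>H)

lemma fin_coact_gen [simp]: "fin (coact_gen w)"
  by (simp add: coact_gen_def)

lemma diag_coact_eq_fext:
  "diag_coact z = fext (\<lambda>u. fext (\<lambda>v. fdelta (fst u * fst v, snd u, snd v)) (\<rho>H (snd z))) (\<rho>H (fst z))"
  unfolding diag_coact_def by (simp add: fmap_ftens split_beta)

lemma tens_left_\<rho>H: "tens_left \<rho>H t = fext coact_gen t"
  unfolding coact_gen_def by (rule tens_left_eq_fext) simp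

lemma preserves_coact_gen: "preserves_rels coact_gen RPC RHPC"
proof (rule preserves_rels2)
  fix a a' b
  show "teq RHPC (coact_gen (a + a', b)) (coact_gen (a, b) + coact_gen (a', b))"
    unfolding coact_gen_def fst_conv snd_conv fsuffix_add[OF fin_\<rho>H fin_\<rho>H, symmetric]
    by (intro teq_fsuffix_rels2 fin_add \<rho>H_add fin_\<rho>H)
next
  fix k a b
  show "teq RHPC (coact_gen (sP k a, b)) (fscal k (coact_gen (a, b)))"
    unfolding coact_gen_def fst_conv snd_conv fsuffix_fscal[OF fin_\<rho>H, symmetric]
    by (intro teq_fsuffix_rels2 fin_fscal \<rho>H_scale fin_\<rho>H)
next
  fix a b b'
  show "teq RHPC (coact_gen (a, b + b')) (coact_gen (a, b) + coact_gen (a, b'))"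
    unfolding coact_gen_def fsuffix_def fst_conv snd_conv fext_add_fun[symmetric]
    by (rule teq_fext_cong) (simp add: teq_rels3_slots)
next
  fix k a b
  show "teq RHPC (coact_gen (a, sC k b)) (fscal k (coact_gen (a, b)))"
    unfolding coact_gen_def fsuffix_def fst_conv snd_conv fext_fscal_fun[symmetric]
    by (rule teq_fext_cong) (simp add: teq_rels3_slots)
qed

lemma preserves_mult_HPC: "preserves_rels (\<lambda>w. fdelta (mult_HPC u w)) RHPC RHPC"
  by (rule preserves_rels3)
    (simp_all add: mult_HPC_def distrib_left scaleH_mult(2)[symmetric] scaleP_mult(2)[symmetric]
      teq_rels3_slots)

lemma id_can_diag_coact_eq_tens_right:
  "fext id_can (diag_coact (x, y)) =
     fext (\<lambda>u. fext (\<lambda>w. fdelta (mult_HPC u w)) (tens_right \<rho>C (\<rho>H y))) (\<rho>H x)"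
proof -
  have id_can_eq: "id_can (h, p, q) = fext (\<lambda>w. fdelta (h, p * fst w, snd w)) (\<rho>C q)" for h p q
    by (simp add: id_can_def can_gen_def lmulPC_eq_fext fprefix_fext)
  have "fext (\<lambda>w. fdelta (mult_HPC u w)) (tens_right \<rho>C (\<rho>H y))
      = fext (\<lambda>v. id_can (fst u * fst v, snd u, snd v)) (\<rho>H y)" for u
    by (simp add: tens_right_eq_fext[OF fin_\<rho>C] fext_fext fext_fprefix id_can_eq mult_HPC_def)
  then show ?thesis
    by (simp add: diag_coact_eq_fext fext_fext_fdelta)
qed

lemma mult_HPC_tens_left_\<rho>H:
  "fext (\<lambda>u. fext (\<lambda>w. fdelta (mult_HPC u w)) (tens_left \<rho>H (\<rho>C y))) (\<rho>H x) =
     fext (\<lambda>w. fsuffix (snd w) (tmul (\<rho>H x) (\<rho>H (fst w)))) (\<rho>C y)"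
proof -
  have "fext (\<lambda>w. fdelta (mult_HPC u w)) (tens_left \<rho>H (\<rho>C y)) =
      fext (\<lambda>w. fext (\<lambda>v. fdelta (fst u * fst v, snd u * snd v, snd w)) (\<rho>H (fst w))) (\<rho>C y)" for u
    unfolding tens_left_\<rho>H
    by (subst fext_fext) (simp_all add: coact_gen_def fsuffix_def fext_fext fin_fext mult_HPC_def)
  then have "fext (\<lambda>u. fext (\<lambda>w. fdelta (mult_HPC u w)) (tens_left \<rho>H (\<rho>C y))) (\<rho>H x) =
      fext (\<lambda>w. fext (\<lambda>u. fext (\<lambda>v. fdelta (fst u * fst v, snd u * snd v, snd w)) (\<rho>H (fst w)))
        (\<rho>H x)) (\<rho>C y)"
    by (simp add: fext_swap[where f="\<rho>H x"])
  also have "\<dots> = fext (\<lambda>w. fsuffix (snd w) (tmul (\<rho>H x) (\<rho>H (fst w)))) (\<rho>C y)"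
    by (simp add: tmul_eq_fext fsuffix_def fext_fext_fdelta)
  finally show ?thesis .
qed

lemma id_can_diag_coact_teq_tens_left: "teq RHPC (fext id_can (diag_coact z)) (tens_left \<rho>H (can_gen z))"
proof -
  obtain x y where z: "z = (x, y)"
    by (cases z)
  have fin_tr: "fin (tens_right \<rho>C (\<rho>H y))"
    unfolding tens_right_eq_fext[OF fin_\<rho>C] by (rule fin_fext) auto
  have fin_tl: "fin (tens_left \<rho>H (\<rho>C y))"
    unfolding tens_left_\<rho>H by (rule fin_fext) auto
  have "teq RHPC (fext id_can (diag_coact z))
      (fext (\<lambda>u. fext (\<lambda>w. fdelta (mult_HPC u w)) (tens_left \<rho>H (\<rho>C y))) (\<rho>H x))"
    unfolding z id_can_diag_coact_eq_tens_right
    by (rule teq_fext_cong)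
      (rule teq_fext_preserves[OF rels_fin_rels3 preserves_mult_HPC fin_tr fin_tl coactions_commute])
  also have "\<dots> = fext (\<lambda>w. fsuffix (snd w) (tmul (\<rho>H x) (\<rho>H (fst w)))) (\<rho>C y)"
    by (rule mult_HPC_tens_left_\<rho>H)
  also have "teq RHPC \<dots> (fext (\<lambda>w. coact_gen (x * fst w, snd w)) (\<rho>C y))"
    by (rule teq_fext_cong) (simp add: coact_gen_def teq_fsuffix_rels2 fin_tmul teq_sym[OF \<rho>H_mult])
  also have "\<dots> = tens_left \<rho>H (can_gen z)"
    by (simp add: z tens_left_\<rho>H can_gen_def lmulPC_eq_fext fext_fext)
  finally show ?thesis .
qed

lemma diag_coact_translation:
  assumes t: "fin t" and can_t: "teq RPC (can \<rho>C t) (fdelta (1, c))"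
  shows "teq RHPBP (fext diag_coact t) (fprefix 1 t)"
proof (rule id_can_cancel)
  show "fin (fext diag_coact t)" "fin (fprefix 1 t)"
    using t by (auto intro: fin_fext)
  have "teq RHPC (fext id_can (fext diag_coact t)) (fext (\<lambda>z. tens_left \<rho>H (can_gen z)) t)"
    using t by (simp add: fext_fext teq_fext_cong id_can_diag_coact_teq_tens_left)
  also have "\<dots> = fext coact_gen (can \<rho>C t)"
    using t by (simp add: tens_left_\<rho>H can_eq_fext fext_fext)
  also have "teq RHPC \<dots> (coact_gen (1, c))"
    using teq_fext_preserves[OF rels_fin_rels2 preserves_coact_gen fin_can[OF t] _ can_t] by simp
  also have "teq RHPC \<dots> (fdelta (1, 1, c))"
    using teq_fsuffix_rels2[OF fin_\<rho>H _ \<rho>H_one, where c=c and sC=sC] by (simp add: coact_gen_def fsuffix_def)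
  also have "teq RHPC \<dots> (fprefix 1 (can \<rho>C t))"
    using teq_fprefix_rels2[OF fin_can[OF t] _ can_t, where sH=sH and h=1] by (simp add: teq_sym)
  also have "\<dots> = fext id_can (fprefix 1 t)"
    using t by (simp add: fext_fprefix id_can_def can_eq_fext fprefix_fext)
  finally show "teq RHPC (fext id_can (fext diag_coact t)) (fext id_can (fprefix 1 t))" .
qed

end

context galois_bicomodule_algebra
begin

context
  fixes S :: "'h \<Rightarrow> 'h"
  assumes antipode_S: "antipode sH \<Delta>H \<epsilon>H S"
begin

lemma S_add: "S (x + y) = S x + S y" and S_scale: "S (sH k x) = sH k (S x)"
  using antipode_S unfolding antipode_def lin_map_def by auto

lemma S_right: "(\<Sum>z\<in>supp (\<Delta>H x). sH (\<Delta>H x z) (fst z * S (snd z))) = sH (\<epsilon>H x) 1"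
  using antipode_S unfolding antipode_def by auto

definition twist_gen :: "'h \<Rightarrow> 'p \<Rightarrow> 'h \<times> 'p \<Rightarrow> 'h \<times> 'p \<times> 'p \<Rightarrow> 'k" where
  "twist_gen h p = (\<lambda>v. fdelta (h * S (fst v), p, snd v))"

definition twist :: "'h \<times> 'p \<times> 'p \<Rightarrow> 'h \<times> 'p \<times> 'p \<Rightarrow> 'k" where
  "twist w = fext (twist_gen (fst w) (fst (snd w))) (\<rho>H (snd (snd w)))"

lemma preserves_twist_gen: "preserves_rels (twist_gen h p) RHP RHPBP"
  by (rule preserves_rels2)
    (simp_all add: twist_gen_def S_add S_scale distrib_left scaleH_mult(2)[symmetric]
      teq_relsHPBP_slots)

lemma teq_twist_gen:
  "fin u \<Longrightarrow> fin v \<Longrightarrow> teq RHP u v \<Longrightarrow> teq RHPBP (fext (twist_gen h p) u) (fext (twist_gen h p) v)"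
  by (rule teq_fext_preserves[OF rels_fin_rels2 preserves_twist_gen])

lemma twist_balanced:
  assumes b: "b \<in> B"
  shows "teq RHPBP (twist (h, x * b, y)) (twist (h, x, b * y))"
proof -
  have "teq RHP (\<rho>H (b * y)) (tmul (fdelta (1, b)) (\<rho>H y))"
    using \<rho>H_mult teq_tmul_left[OF k_algebra_H k_algebra_P fin_\<rho>H _ fin_\<rho>H \<rho>H_coinv[OF b]]
    by (rule teq_trans) simp
  then have "teq RHPBP (twist (h, x, b * y)) (fext (twist_gen h x) (tmul (fdelta (1, b)) (\<rho>H y)))"
    unfolding twist_def fst_conv snd_conv by (intro teq_twist_gen fin_tmul) simp_all
  also have "\<dots> = fext (\<lambda>v. fdelta (h * S (fst v), x, b * snd v)) (\<rho>H y)"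
    by (simp add: tmul_eq_fext fext_fext twist_gen_def)
  also have "teq RHPBP \<dots> (twist (h, x * b, y))"
    unfolding twist_def twist_gen_def fst_conv snd_conv
    by (rule teq_fext_cong) (simp add: teq_sym[OF balrel_relsHPBP[OF b]])
  finally show ?thesis
    by (rule teq_sym)
qed

lemma preserves_twist: "preserves_rels twist RHPBP RHPBP"
proof (rule preserves_relsHPBP)
  show "preserves_rels twist (rels3 sH sP sP) RHPBP"
  proof (rule preserves_rels3)
    fix a b c c'
    show "teq RHPBP (twist (a, b, c + c')) (twist (a, b, c) + twist (a, b, c'))"
      unfolding twist_def fst_conv snd_conv fext_add[OF fin_\<rho>H fin_\<rho>H, symmetric]
      by (intro teq_twist_gen fin_add \<rho>H_add fin_\<rho>H)
  next
    fix k a b c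
    show "teq RHPBP (twist (a, b, sP k c)) (fscal k (twist (a, b, c)))"
      unfolding twist_def fst_conv snd_conv fext_fscal[OF fin_\<rho>H, symmetric]
      by (intro teq_twist_gen fin_fscal \<rho>H_scale fin_\<rho>H)
  qed (simp_all only: twist_def fst_conv snd_conv fext_add_fun[symmetric] fext_fscal_fun[symmetric];
      rule teq_fext_cong;
      simp add: twist_gen_def distrib_right scaleH_mult(1)[symmetric] teq_relsHPBP_slots)+
qed (rule twist_balanced)

definition mult_twist :: "'h \<times> 'p \<Rightarrow> 'h \<times> 'h \<times> 'p \<Rightarrow> 'h \<times> 'p \<times> 'p" where
  "mult_twist u w = (fst u * fst w * S (fst (snd w)), snd u, snd (snd w))"

lemma preserves_mult_twist: "preserves_rels (\<lambda>w. fdelta (mult_twist u w)) (rels3 sH sH sP) RHPBP"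
  by (rule preserves_rels3)
    (simp_all add: mult_twist_def distrib_left distrib_right S_add S_scale scaleH_mult[symmetric]
      teq_relsHPBP_slots)

lemma antipode_collapse:
  "teq RHPBP (fext (\<lambda>v. fdelta (g * fst v * S (snd v), p, q)) (\<Delta>H h)) (fscal (\<epsilon>H h) (fdelta (g, p, q)))"
proof -
  have "(\<Sum>v\<in>supp (\<Delta>H h). sH (\<Delta>H h v) (g * fst v * S (snd v)))
      = g * (\<Sum>v\<in>supp (\<Delta>H h). sH (\<Delta>H h v) (fst v * S (snd v)))"
    by (simp add: mult.assoc scaleH_mult(2) sum_distrib_left)
  also have "\<dots> = g * sH (\<epsilon>H h) 1"
    by (simp add: S_right)
  also have "\<dots> = sH (\<epsilon>H h) g"
    by (simp add: scaleH_mult(2)[symmetric])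
  finally have "teq RHPBP (fext (\<lambda>v. fdelta (g * fst v * S (snd v), p, q)) (\<Delta>H h)) (fdelta (sH (\<epsilon>H h) g, p, q))"
    using teq_linrels_sum[OF linrels_subset_relsHPBP(1)[where sH=sH and sP=sP and B=B and b=p
          and c=q], where A="supp (\<Delta>H h)" and c="\<Delta>H h" and v="\<lambda>v. g * fst v * S (snd v)"]
    by (simp add: fext_eq_sum)
  then show ?thesis
    by (rule teq_trans) (simp add: teq_relsHPBP_slots)
qed

lemma counit_collapse:
  "teq RHPBP (fext (\<lambda>w. fscal (\<epsilon>H (fst w)) (fdelta (g, p, snd w))) (\<rho>H y)) (fdelta (g, p, y))"
  using teq_linrels_sum[OF linrels_subset_relsHPBP(3)[where sH=sH and sP=sP and B=B and a=g
        and b=p], where A="supp (\<rho>H y)" and c="\<lambda>w. \<rho>H y w * \<epsilon>H (fst w)" and v=snd]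
  by (simp add: fext_eq_sum fscal_fscal \<rho>H_counit)

lemma twist_coact_mult:
  "teq RHPBP (fext (\<lambda>v. twist (fst u * fst v, snd u, snd v)) (\<rho>H y)) (fdelta (fst u, snd u, y))"
proof -
  have fin_tr: "fin (tens_right \<rho>H (\<rho>H y))"
    unfolding tens_right_eq_fext[OF fin_\<rho>H] by (rule fin_fext) auto
  have fin_tl: "fin (tens_left \<Delta>H (\<rho>H y))"
    unfolding tens_left_eq_fext[OF fin_\<Delta>H] by (rule fin_fext) auto
  have twist_as_tens_right: "fext (\<lambda>v. twist (fst u * fst v, snd u, snd v)) (\<rho>H y)
      = fext (\<lambda>w. fdelta (mult_twist u w)) (tens_right \<rho>H (\<rho>H y))"
    by (simp add: tens_right_eq_fext[OF fin_\<rho>H] fext_fext fext_fprefix twist_def twist_gen_def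
        mult_twist_def)
  have "teq RHPBP (fext (\<lambda>w. fdelta (mult_twist u w)) (tens_right \<rho>H (\<rho>H y)))
      (fext (\<lambda>w. fdelta (mult_twist u w)) (tens_left \<Delta>H (\<rho>H y)))"
    by (rule teq_fext_preserves[OF rels_fin_rels3 preserves_mult_twist fin_tr fin_tl
          teq_sym[OF \<rho>H_coassoc]])
  also have "\<dots> = fext (\<lambda>w. fext (\<lambda>v. fdelta (fst u * fst v * S (snd v), snd u, snd w)) (\<Delta>H (fst w)))
      (\<rho>H y)"
    unfolding tens_left_eq_fext[OF fin_\<Delta>H]
    by (subst fext_fext) (simp_all add: fsuffix_def fext_fext fin_fext mult_twist_def)
  also have "teq RHPBP \<dots> (fext (\<lambda>w. fscal (\<epsilon>H (fst w)) (fdelta (fst u, snd u, snd w))) (\<rho>H y))"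
    by (rule teq_fext_cong) (rule antipode_collapse)
  also have "teq RHPBP \<dots> (fdelta (fst u, snd u, y))"
    by (rule counit_collapse)
  finally show ?thesis
    unfolding twist_as_tens_right .
qed

lemma twist_diag_coact:
  "teq RHPBP (fext twist (diag_coact z)) (fext (\<lambda>v. fdelta (fst v, snd v, snd z)) (\<rho>H (fst z)))"
  unfolding diag_coact_eq_fext fext_fext_fdelta[OF fin_\<rho>H fin_\<rho>H]
  by (rule teq_fext_cong) (rule twist_coact_mult)

lemma translation_antipode:
  assumes t: "fin t" and can_t: "teq RPC (can \<rho>C t) (fdelta (1, c))"
  shows "teq RHPBP (fext (\<lambda>z. fext (\<lambda>v. fdelta (fst v, snd v, snd z)) (\<rho>H (fst z))) t)
    (fext (\<lambda>z. fext (\<lambda>v. fdelta (S (fst v), fst z, snd v)) (\<rho>H (snd z))) t)"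
proof -
  have "teq RHPBP (fext (\<lambda>z. fext (\<lambda>v. fdelta (fst v, snd v, snd z)) (\<rho>H (fst z))) t)
      (fext (\<lambda>z. fext twist (diag_coact z)) t)"
    by (rule teq_fext_cong) (rule teq_sym[OF twist_diag_coact])
  also have "\<dots> = fext twist (fext diag_coact t)"
    using t by (simp add: fext_fext)
  also have "teq RHPBP \<dots> (fext twist (fprefix 1 t))"
    using t diag_coact_translation[OF t can_t]
    by (intro teq_fext_preserves[OF rels_fin_relsHPBP preserves_twist] fin_fext) auto
  also have "\<dots> = fext (\<lambda>z. fext (\<lambda>v. fdelta (S (fst v), fst z, snd v)) (\<rho>H (snd z))) t"
    using t by (simp add: fext_fprefix twist_def twist_gen_def)
  finally show ?thesis .
qed

end

end

theorem mainTheorem4: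
  fixes sC :: "'k::field \<Rightarrow> 'c::ab_group_add \<Rightarrow> 'c"
    and \<Delta>C :: "'c \<Rightarrow> 'c \<times> 'c \<Rightarrow> 'k" and \<epsilon>C :: "'c \<Rightarrow> 'k"
    and sH :: "'k \<Rightarrow> 'h::{ring,monoid_mult} \<Rightarrow> 'h"
    and \<Delta>H :: "'h \<Rightarrow> 'h \<times> 'h \<Rightarrow> 'k" and \<epsilon>H :: "'h \<Rightarrow> 'k"
    and sP :: "'k \<Rightarrow> 'p::{ring,monoid_mult} \<Rightarrow> 'p"
    and \<rho>H :: "'p \<Rightarrow> 'h \<times> 'p \<Rightarrow> 'k" and \<rho>C :: "'p \<Rightarrow> 'p \<times> 'c \<Rightarrow> 'k"
  assumes "coalgebra sC \<Delta>C \<epsilon>C"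
    and "bialgebra sH \<Delta>H \<epsilon>H"
    and "k_algebra sP"
    and "bicomodule sH \<Delta>H \<epsilon>H sC \<Delta>C \<epsilon>C sP \<rho>H \<rho>C"
    and "coaction_alg_map sH sP \<rho>H"
    and "galois sC sP \<rho>C"
    and "coinvC sC sP \<rho>C \<subseteq> coinvH sH sP \<rho>H"
  shows "(\<forall>c t. finite (supp t) \<and> teq (rels2 sP sC) (can \<rho>C t) (fdelta (1, c)) \<longrightarrow>
           teq (relsHPBP sH sP (coinvC sC sP \<rho>C))
             (fext (\<lambda>(x, y). fmap (\<lambda>((h1, p1), (h2, q1)). (h1 * h2, p1, q1))
                                  (ftens (\<rho>H x) (\<rho>H y))) t)
             (fmap (\<lambda>(x, y). (1, x, y)) t))
    \<and> (\<forall>S. antipode sH \<Delta>H \<epsilon>H S \<longrightarrow>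
         (\<forall>c t. finite (supp t) \<and> teq (rels2 sP sC) (can \<rho>C t) (fdelta (1, c)) \<longrightarrow>
           teq (relsHPBP sH sP (coinvC sC sP \<rho>C))
             (fext (\<lambda>(x, y). fmap (\<lambda>(h, p). (h, p, y)) (\<rho>H x)) t)
             (fext (\<lambda>(x, y). fmap (\<lambda>(h, q). (S h, x, q)) (\<rho>H y)) t)))"
proof -
  interpret galois_bicomodule_algebra sC \<Delta>C \<epsilon>C sH \<Delta>H \<epsilon>H sP \<rho>H \<rho>C
    using assms(2-7) by unfold_locales
  have diag: "(\<lambda>(x, y). fmap (\<lambda>((h1, p1), (h2, q1)). (h1 * h2, p1, q1)) (ftens (\<rho>H x) (\<rho>H y)))
      = diag_coact"
    by (simp add: fun_eq_iff diag_coact_def)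
  have left: "(\<lambda>(x, y). fmap (\<lambda>(h, p). (h, p, y)) (\<rho>H x))
      = (\<lambda>z. fext (\<lambda>v. fdelta (fst v, snd v, snd z)) (\<rho>H (fst z)))"
    by (simp add: fun_eq_iff fmap_eq_fext split_beta)
  have right: "(\<lambda>(x, y). fmap (\<lambda>(h, q). (S h, x, q)) (\<rho>H y))
      = (\<lambda>z. fext (\<lambda>v. fdelta (S (fst v), fst z, snd v)) (\<rho>H (snd z)))" for S :: "'h \<Rightarrow> 'h"
    by (simp add: fun_eq_iff fmap_eq_fext split_beta)
  show ?thesis
    using diag_coact_translation translation_antipode
    unfolding diag left right by (auto simp: fmap_Pair_eq_fprefix)
qed

end
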